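(* Assume the linear band crossing and Band Crossing Scenario described in the context, with trajectory $(q(t),p(t))$ on $[0,t^* )$ and limit point $(q^*,p^* )$. (i) For all sufficiently small $\delta$ with $0<\delta<t^*$, the system $$\dot q_+=\partial_pE_+(p_+),\quad \dot p_+=-\partial_qW(q_+),\quad q_+(t^* )=q^*,\ p_+(t^* )=p^*$$ has a unique smooth solution $(q_+(t),p_+(t))\in\mathbb R\times U$ on $[t^*-\delta,t^*+\delta]$. This solution satisfies $(q(t),p(t))=(q_+(t),p_+(t))$ for all $t\in[t^*-\delta,t^* )$. (ii) For sufficiently small $T\ge t^*+\delta$, there exists a solution $(q_{n+1}(t),p_{n+1}(t))\in\mathbb R\times\mathcal B$ on $(t^*,T]$ of $$\dot q_{n+1}=\partial_pE_{n+1}(p_{n+1}),\quad \dot p_{n+1}=-\partial_qW(q_{n+1})$$ with $\lim_{t\downarrow t^*}(q_{n+1}(t),p_{n+1}(t))=(q^*,p^* )$ and $G(E_{n+1}(p_{n+1}(t)))>0$ for all $t\in(t^*,T]$. It satisfies $(q_+(t),p_+(t))=(q_{n+1}(t),p_{n+1}(t))$ for all $t\in(t^*,t^*+\delta]$. (iii) Consequently, the map $t\mapsto(\mathfrak q_+(t),\mathfrak p_+(t))$ is smooth as a map $[0,T]\to\mathbb R\times\mathcal B$. This map is defined as $(q(t),p(t))$ on $[0,t^*-\delta]$, as $(q_+(t),p_+(t))$ on $[t^*-\delta,t^*+\delta]$, and as $(q_{n+1}(t),p_{n+1}(t))$ on $[t^*+\delta,T]$.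
   Context: **Potentials.** Let $V:\mathbb R\to\mathbb R$ be smooth and $1$-periodic, and let $W:\mathbb R\to\mathbb R$ be smooth with all derivatives bounded. **Bloch bands.** For $p\in\mathbb R$, $H(p):=\frac12(p-i\partial_z)^2+V(z)$ acts on $1$-periodic functions. Its eigenvalues, ordered with multiplicity, are $E_1(p)\le E_2(p)\le\cdots$, with normalized eigenfunctions $\chi_m(z;p)$ (inner product $\int_0^1\bar fg$). The Brillouin zone is $\mathcal B=[0,2\pi]$, and $G(E_m(p)):=\min_{m'\ne m}|E_m(p)-E_{m'}(p)|$. **Linear band crossing.** $U\subset\mathcal B$ is open with $p^*\in U$, and: - (A1) $E_n(p^* )=E_{n+1}(p^* )$, and this is the only degeneracy of $E_n,E_{n+1}$ in $U$. - (A2) There is $M>0$ with $|E_m(p)-E_{n+1}(p)|,|E_n(p)-E_m(p)|\ge M$ for all $p\in\overline U$ and all $m\notin\{n,n+1\}$. - (A3) The maps $(E_+,\chi_+):=(E_n,\chi_n)$ for $p<p^*$ and $(E_{n+1},\chi_{n+1})$ for $p\ge p^*$, and $(E_-,\chi_-):=(E_{n+1},\chi_{n+1})$ for $p<p^*$ and $(E_n,\chi_n)$ for $p\ge p^*$, are smooth on $U$. - (A4) $\partial_pE_+(p^* )>0$ and $\partial_pE_-(p^* )<0$. **Band Crossing Scenario.** $(q_0,p_0)\in\mathbb R\times\mathcal B$ with $G(E_n(p_0))>0$, and $t^*>0$, are such that $\dot q=\partial_pE_n(p)$, $\dot p=-\partial_qW(q)$, $(q(0),p(0))=(q_0,p_0)$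 has a unique smooth solution $(q(t),p(t))\in\mathbb R\times\mathcal B$ on $[0,t^* )$. Along it $G(E_n(p(t)))>0$ for $t\in[0,t^* )$ and $\lim_{t\uparrow t^*}p(t)=p^*$. With $q^*:=\lim_{t\uparrow t^*}q(t)$, it is assumed that $-\partial_qW(q^* )>0$. *)

theory Defs
  imports "HOL-Analysis.Analysis"
begin

text \<open>C-infinity on a set S (relative to S): continuous on S, and every partial
derivative (taken along coordinate lines, relative to S, hence one-sided at
boundary points of intervals) exists on S and is again C-infinity on S.\<close>

coinductive C_inf :: "'a::euclidean_space set \<Rightarrow> ('a \<Rightarrow> 'b::real_normed_vector) \<Rightarrow> bool"
  for S :: "'a set" where
  "continuous_on S f \<Longrightarrow>
   (\<forall>i\<in>Basis. \<exists>g. (\<forall>x\<in>S. ((\<lambda>t. f (x + t *\<^sub>R i)) has_vector_derivative g x)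
                               (at 0 within {t. x + t *\<^sub>R i \<in> S})) \<and> C_inf S g)
   \<Longrightarrow> C_inf S f"

text \<open>f is an eigenfunction of H(p) = 1/2 (p - i d/dz)^2 + V acting on
1-periodic functions, with eigenvalue lam.  Note (p - i d/dz)^2 f = p^2 f - 2 i p f' - f''.\<close>

definition bloch_eigenfunction ::
  "(real \<Rightarrow> real) \<Rightarrow> real \<Rightarrow> real \<Rightarrow> (real \<Rightarrow> complex) \<Rightarrow> bool" where
  "bloch_eigenfunction V p lam f \<longleftrightarrow>
     (\<forall>z. f (z + 1) = f z) \<and> (\<exists>z. f z \<noteq> 0) \<and>
     (\<exists>f' f''. \<forall>z. (f has_vector_derivative f' z) (at z) \<and>
                   (f' has_vector_derivative f'' z) (at z) \<and>
                   (1/2) * (complex_of_real (p\<^sup>2) * f z - 2 * \<i> * complex_of_real p * f' z - f'' z)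
                     + complex_of_real (V z) * f z = complex_of_real lam * f z)"

definition lin_indep_fun :: "(real \<Rightarrow> complex) set \<Rightarrow> bool" where
  "lin_indep_fun F \<longleftrightarrow>
     (\<forall>c :: (real \<Rightarrow> complex) \<Rightarrow> complex.
        (\<forall>z. (\<Sum>f\<in>F. c f * f z) = 0) \<longrightarrow> (\<forall>f\<in>F. c f = 0))"

text \<open>Number of eigenvalues of H(p) that are \<le> lam, counted with multiplicity
(= maximal number of linearly independent eigenfunctions with eigenvalue \<le> lam).\<close>

definition bloch_count :: "(real \<Rightarrow> real) \<Rightarrow> real \<Rightarrow> real \<Rightarrow> nat" where
  "bloch_count V p lam =
     Sup {card F | F. finite F \<and> lin_indep_fun F \<and>
                      (\<forall>f\<in>F. \<exists>mu\<le>lam. bloch_eigenfunction V p mu f)}"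

text \<open>E m p, for m \<ge> 1: the m-th eigenvalue of H(p), ordered increasingly and
repeated according to multiplicity.\<close>

definition bloch_E :: "(real \<Rightarrow> real) \<Rightarrow> nat \<Rightarrow> real \<Rightarrow> real" where
  "bloch_E V m p = Inf {lam. m \<le> bloch_count V p lam}"

definition bloch_gap :: "(real \<Rightarrow> real) \<Rightarrow> nat \<Rightarrow> real \<Rightarrow> real" where
  "bloch_gap V m p = Inf {\<bar>bloch_E V m p - bloch_E V m' p\<bar> | m'. 1 \<le> m' \<and> m' \<noteq> m}"

definition flow_sol ::
  "(real \<Rightarrow> real) \<Rightarrow> (real \<Rightarrow> real) \<Rightarrow> real set \<Rightarrow> (real \<Rightarrow> real) \<Rightarrow> (real \<Rightarrow> real) \<Rightarrow> bool" where
  "flow_sol E W I q p \<longleftrightarrow>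
     (\<forall>t\<in>I. (\<exists>D. (E has_real_derivative D) (at (p t)) \<and> (q has_real_derivative D) (at t within I))
           \<and> (p has_real_derivative - deriv W (q t)) (at t within I))"

end

theory Submission
  imports Defs
begin

text \<open>
  Write e for the derivative of the crossing band E+ and f = -W'. Near (q*, p*) both are smooth, hence
  Lipschitz, and f > 0, so along solutions of q' = e(p), p' = f(q) the momentum increases strictly.
  Picard iteration gives a solution (q+, p+) with (q+, p+)(t*) = (q*, p*); it is smooth because every
  time derivative of a(q) b(p) is again a sum of such products. Before t* the given trajectory has
  p < p*, where E+ = E(n), so it solves the same system, and a Gronwall estimate for the squared distance,
  which tends to 0 at t*, shows that it coincides with (q+, p+). After t* we have p+ > p*, where
  E+ = E(n+1) and the gap of E(n+1) is positive by (A1) and (A2); so (q+, p+) itself continues as the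
  E(n+1) trajectory.
\<close>

section \<open>Smooth functions of a real variable\<close>

lemma has_vector_derivative_shift_iff:
  fixes f :: "real \<Rightarrow> 'b::real_normed_vector"
  shows "((\<lambda>t. f (x + t)) has_vector_derivative D) (at 0 within {t. x + t \<in> S})
     \<longleftrightarrow> (f has_vector_derivative D) (at x within S)"
proof
  assume "((\<lambda>t. f (x + t)) has_vector_derivative D) (at 0 within {t. x + t \<in> S})"
  moreover have "(\<lambda>y. y - x) ` S = {t. x + t \<in> S}"
    by (force intro: image_eqI[of _ _ "x + t" for t])
  ultimately have "((\<lambda>t. f (x + t)) \<circ> (\<lambda>y. y - x) has_vector_derivative 1 *\<^sub>R D) (at x within S)"
    by (intro vector_diff_chain_within) (auto intro!: derivative_eq_intros)
  then show "(f has_vector_derivative D) (at x within S)" by (simp add: o_def)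
next
  assume "(f has_vector_derivative D) (at x within S)"
  moreover have "(\<lambda>t. x + t) ` {t. x + t \<in> S} = S"
    by (force intro: image_eqI[of _ _ "y - x" for y])
  ultimately have "(f \<circ> (\<lambda>t. x + t) has_vector_derivative 1 *\<^sub>R D) (at 0 within {t. x + t \<in> S})"
    by (intro vector_diff_chain_within) (auto intro!: derivative_eq_intros)
  then show "((\<lambda>t. f (x + t)) has_vector_derivative D) (at 0 within {t. x + t \<in> S})"
    by (simp add: o_def)
qed

lemma C_inf_real_iff:
  fixes S :: "real set" and f :: "real \<Rightarrow> 'b::real_normed_vector"
  shows "C_inf S f \<longleftrightarrow> continuous_on S f \<and>
     (\<exists>g. (\<forall>x\<in>S. (f has_vector_derivative g x) (at x within S)) \<and> C_inf S g)"
  by (subst C_inf.simps) (simp add: Basis_real_def has_vector_derivative_shift_iff)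

lemma C_inf_real_coinduct:
  fixes S :: "real set" and f :: "real \<Rightarrow> 'b::real_normed_vector"
  assumes "X f"
    and "\<And>f. X f \<Longrightarrow> continuous_on S f \<and>
          (\<exists>g. (\<forall>x\<in>S. (f has_vector_derivative g x) (at x within S)) \<and> (X g \<or> C_inf S g))"
  shows "C_inf S f"
  using assms(1)
proof (rule C_inf.coinduct)
  fix f assume "X f"
  from assms(2)[OF this] show "\<exists>h. f = h \<and> continuous_on S h \<and>
      (\<forall>i\<in>Basis. \<exists>g. (\<forall>x\<in>S. ((\<lambda>t. h (x + t *\<^sub>R i)) has_vector_derivative g x)
          (at 0 within {t. x + t *\<^sub>R i \<in> S})) \<and> (X g \<or> C_inf S g))"
    by (simp add: Basis_real_def has_vector_derivative_shift_iff)
qed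

lemma C_inf_realE:
  fixes S :: "real set" and f :: "real \<Rightarrow> 'b::real_normed_vector"
  assumes "C_inf S f"
  obtains g where "continuous_on S f" "\<forall>x\<in>S. (f has_vector_derivative g x) (at x within S)" "C_inf S g"
  using assms C_inf_real_iff[of S f] by blast

lemma C_inf_cong:
  fixes S :: "real set" and f :: "real \<Rightarrow> 'b::real_normed_vector"
  assumes "C_inf S f" "\<And>x. x \<in> S \<Longrightarrow> f x = g x"
  shows "C_inf S g"
proof -
  have "\<exists>f. C_inf S f \<and> (\<forall>x\<in>S. f x = g x)" using assms by blast
  then show ?thesis
  proof (rule C_inf_real_coinduct)
    fix h assume "\<exists>f. C_inf S f \<and> (\<forall>x\<in>S. f x = h x)"
    then obtain f where f: "C_inf S f" "\<forall>x\<in>S. f x = h x" by blast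
    from f(1) obtain g where g: "continuous_on S f" "\<forall>x\<in>S. (f has_vector_derivative g x) (at x within S)"
      "C_inf S g"
      by (rule C_inf_realE)
    have "continuous_on S h" using g(1) f(2) by (simp cong: continuous_on_cong)
    moreover have "\<forall>x\<in>S. (h has_vector_derivative g x) (at x within S)"
    proof
      fix x assume "x \<in> S"
      with f(2) g(2) show "(h has_vector_derivative g x) (at x within S)"
        by (intro has_vector_derivative_transform[of x S h f]) auto
    qed
    ultimately show "continuous_on S h \<and> (\<exists>g. (\<forall>x\<in>S. (h has_vector_derivative g x) (at x within S))
        \<and> ((\<exists>f. C_inf S f \<and> (\<forall>x\<in>S. f x = g x)) \<or> C_inf S g))"
      using g(3) by blast
  qed
qed

lemma C_inf_subset:
  fixes S :: "real set" and f :: "real \<Rightarrow> 'b::real_normed_vector"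
  assumes "C_inf S f" "T \<subseteq> S"
  shows "C_inf T f"
  using assms(1)
proof (rule C_inf_real_coinduct[where X = "C_inf S"])
  fix h assume "C_inf S h"
  then obtain g where g: "continuous_on S h" "\<forall>x\<in>S. (h has_vector_derivative g x) (at x within S)"
    "C_inf S g"
    by (rule C_inf_realE)
  have "continuous_on T h" using g(1) assms(2) by (rule continuous_on_subset)
  moreover have "\<forall>x\<in>T. (h has_vector_derivative g x) (at x within T)"
    using g(2) assms(2) by (blast intro: has_vector_derivative_within_subset)
  ultimately show "continuous_on T h \<and>
      (\<exists>g. (\<forall>x\<in>T. (h has_vector_derivative g x) (at x within T)) \<and> (C_inf S g \<or> C_inf T g))"
    using g(3) by blast
qed

lemma C_inf_const: "C_inf (S :: real set) (\<lambda>x. c :: 'b::real_normed_vector)"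
proof (rule C_inf_real_coinduct[where X = "\<lambda>h. \<exists>c. h = (\<lambda>x. c)"])
  fix h :: "real \<Rightarrow> 'b" assume "\<exists>c. h = (\<lambda>x. c)"
  then obtain c where "h = (\<lambda>x. c)" by blast
  moreover have "\<forall>x\<in>S. ((\<lambda>x. c) has_vector_derivative 0) (at x within S)"
    by (simp add: has_vector_derivative_const)
  ultimately show "continuous_on S h \<and> (\<exists>g. (\<forall>x\<in>S. (h has_vector_derivative g x) (at x within S))
      \<and> ((\<exists>c. g = (\<lambda>x. c)) \<or> C_inf S g))"
    by (intro conjI exI[of _ "\<lambda>x. 0"]) auto
qed blast

lemma C_inf_id: "C_inf (S :: real set) (\<lambda>x. x)"
proof -
  have "\<forall>x\<in>S. ((\<lambda>x. x) has_vector_derivative 1) (at x within S)"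
    by (simp add: has_vector_derivative_id)
  moreover have "C_inf S (\<lambda>x. 1 :: real)" by (rule C_inf_const)
  ultimately show ?thesis
    unfolding C_inf_real_iff[of S "\<lambda>x. x"] by (intro conjI continuous_on_id exI[of _ "\<lambda>x. 1"]) simp
qed

lemma C_inf_imp_continuous_on: "C_inf (S :: real set) (f :: real \<Rightarrow> 'b::real_normed_vector) \<Longrightarrow> continuous_on S f"
  by (erule C_inf_realE)

text \<open>A chosen derivative relative to S; it is unspecified unless f is C_inf on S.\<close>

definition deriv_on :: "real set \<Rightarrow> (real \<Rightarrow> real) \<Rightarrow> real \<Rightarrow> real" where
  "deriv_on S f = (SOME g. (\<forall>x\<in>S. (f has_real_derivative g x) (at x within S)) \<and> C_inf S g)"

lemma deriv_on_spec:
  fixes S :: "real set"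
  assumes "C_inf S f"
  shows "(\<forall>x\<in>S. (f has_real_derivative deriv_on S f x) (at x within S)) \<and> C_inf S (deriv_on S f)"
proof -
  define P where "P g \<longleftrightarrow> (\<forall>x\<in>S. (f has_real_derivative g x) (at x within S)) \<and> C_inf S g" for g
  from assms obtain g where "\<forall>x\<in>S. (f has_vector_derivative g x) (at x within S)" "C_inf S g"
    by (rule C_inf_realE)
  then have "P g" by (simp add: P_def has_real_derivative_iff_has_vector_derivative)
  then have "P (SOME g. P g)" by (rule someI[of P])
  moreover have "deriv_on S f = (SOME g. P g)" unfolding deriv_on_def P_def ..
  ultimately have "P (deriv_on S f)" by (simp only:)
  then show ?thesis unfolding P_def .
qed

lemma has_real_derivative_deriv_on:
  assumes "C_inf S f" "x \<in> S"
  shows "(f has_real_derivative deriv_on S f x) (at x within S)"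
  using deriv_on_spec[OF assms(1)] assms(2) by simp

lemma C_inf_deriv_on: "C_inf S f \<Longrightarrow> C_inf S (deriv_on S f)"
  by (drule deriv_on_spec) (rule conjunct2)

lemma has_real_derivative_deriv_on_open:
  assumes "open U" "C_inf U f" "x \<in> U"
  shows "(f has_real_derivative deriv_on U f x) (at x)"
  using has_real_derivative_deriv_on[OF assms(2,3)] unfolding at_within_open[OF assms(3,1)] .

lemma deriv_eq_deriv_on_UNIV: "C_inf UNIV g \<Longrightarrow> deriv g = deriv_on UNIV g"
  by (rule ext, rule DERIV_imp_deriv, rule has_real_derivative_deriv_on_open[OF open_UNIV _ UNIV_I])

lemma has_real_derivative_deriv_on_switch:
  assumes U: "open U" "C_inf U E" "k \<in> U"
    and below: "\<And>x. x \<in> U \<Longrightarrow> x < c \<Longrightarrow> E x = El x" and above: "\<And>x. x \<in> U \<Longrightarrow> c < x \<Longrightarrow> E x = Er x"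
  shows "k < c \<Longrightarrow> (El has_real_derivative deriv_on U E k) (at k)"
    and "c < k \<Longrightarrow> (Er has_real_derivative deriv_on U E k) (at k)"
proof -
  have deriv: "(E has_real_derivative deriv_on U E k) (at k)" by (rule has_real_derivative_deriv_on_open[OF U])
  show "k < c \<Longrightarrow> (El has_real_derivative deriv_on U E k) (at k)"
    by (rule has_field_derivative_transform_within_open[OF deriv, of "U \<inter> {..<c}"]) (use U below in auto)
  show "c < k \<Longrightarrow> (Er has_real_derivative deriv_on U E k) (at k)"
    by (rule has_field_derivative_transform_within_open[OF deriv, of "U \<inter> {c<..}"]) (use U above in auto)
qed

inductive_set product_sums :: "real set \<Rightarrow> (real \<Rightarrow> real) set" for S :: "real set" where
  prod: "C_inf S f \<Longrightarrow> C_inf S g \<Longrightarrow> (\<lambda>x. f x * g x) \<in> product_sums S"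
| add: "h \<in> product_sums S \<Longrightarrow> k \<in> product_sums S \<Longrightarrow> (\<lambda>x. h x + k x) \<in> product_sums S"

lemma product_sums_deriv:
  assumes "h \<in> product_sums S"
  obtains h' where "\<forall>x\<in>S. (h has_real_derivative h' x) (at x within S)" "h' \<in> product_sums S"
  using assms
proof (induction arbitrary: thesis)
  case (prod f g)
  let ?h' = "\<lambda>x. deriv_on S f x * g x + f x * deriv_on S g x"
  have "\<forall>x\<in>S. ((\<lambda>x. f x * g x) has_real_derivative ?h' x) (at x within S)"
    using prod.hyps by (auto intro!: derivative_eq_intros has_real_derivative_deriv_on)
  moreover have "?h' \<in> product_sums S"
    using prod.hyps by (intro product_sums.intros C_inf_deriv_on)
  ultimately show ?case by (rule prod.prems)
next
  case (add h k)
  obtain h' where h': "\<forall>x\<in>S. (h has_real_derivative h' x) (at x within S)" "h' \<in> product_sums S"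
    by (rule add.IH(1))
  obtain k' where k': "\<forall>x\<in>S. (k has_real_derivative k' x) (at x within S)" "k' \<in> product_sums S"
    by (rule add.IH(2))
  have "\<forall>x\<in>S. ((\<lambda>x. h x + k x) has_real_derivative h' x + k' x) (at x within S)"
    using h'(1) k'(1) by (simp add: DERIV_add)
  moreover have "(\<lambda>x. h' x + k' x) \<in> product_sums S"
    using h'(2) k'(2) by (rule product_sums.add)
  ultimately show ?case by (rule add.prems)
qed

lemma C_inf_product_sums: "h \<in> product_sums S \<Longrightarrow> C_inf S h"
proof (rule C_inf_real_coinduct[where X = "\<lambda>h. h \<in> product_sums S"])
  fix h assume "h \<in> product_sums S"
  then obtain h' where h': "\<forall>x\<in>S. (h has_real_derivative h' x) (at x within S)" "h' \<in> product_sums S"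
    by (rule product_sums_deriv)
  have "continuous_on S h"
    by (rule DERIV_continuous_on) (use h'(1) in blast)
  moreover have "\<forall>x\<in>S. (h has_vector_derivative h' x) (at x within S)"
    using h'(1) by (simp add: has_real_derivative_iff_has_vector_derivative)
  ultimately show "continuous_on S h \<and>
      (\<exists>g. (\<forall>x\<in>S. (h has_vector_derivative g x) (at x within S)) \<and> (g \<in> product_sums S \<or> C_inf S g))"
    using h'(2) by blast
qed

lemma C_inf_mult: "C_inf (S :: real set) f \<Longrightarrow> C_inf S g \<Longrightarrow> C_inf S (\<lambda>x. f x * g x :: real)"
  by (rule C_inf_product_sums) (rule product_sums.prod)

lemma C_inf_uminus: "C_inf (S :: real set) f \<Longrightarrow> C_inf S (\<lambda>x. - f x :: real)"
  using C_inf_mult[OF C_inf_const[of S "-1"]] by simp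

lemma C_inf_pair:
  fixes f g :: "real \<Rightarrow> real"
  assumes "C_inf S f" "C_inf S g"
  shows "C_inf S (\<lambda>x. (f x, g x))"
proof -
  let ?X = "\<lambda>h. \<exists>f g. C_inf S f \<and> C_inf S g \<and> h = (\<lambda>x. (f x, g x))"
  have "?X (\<lambda>x. (f x, g x))" using assms by blast
  then show ?thesis
  proof (rule C_inf_real_coinduct)
    fix h :: "real \<Rightarrow> real \<times> real" assume "?X h"
    then obtain f g where fg: "C_inf S f" "C_inf S g" "h = (\<lambda>x. (f x, g x))" by blast
    have "\<forall>x\<in>S. (h has_vector_derivative (deriv_on S f x, deriv_on S g x)) (at x within S)"
      using fg by (auto intro!: has_vector_derivative_Pair
          simp: has_real_derivative_iff_has_vector_derivative[symmetric] has_real_derivative_deriv_on)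
    moreover have "?X (\<lambda>x. (deriv_on S f x, deriv_on S g x))"
      using fg by (blast intro: C_inf_deriv_on)
    moreover have "continuous_on S h"
      using fg(3) continuous_on_Pair[OF C_inf_imp_continuous_on[OF fg(1)] C_inf_imp_continuous_on[OF fg(2)]]
      by simp
    ultimately show "continuous_on S h \<and>
        (\<exists>g. (\<forall>x\<in>S. (h has_vector_derivative g x) (at x within S)) \<and> (?X g \<or> C_inf S g))"
      by (intro conjI exI[of _ "\<lambda>x. (deriv_on S f x, deriv_on S g x)"]) simp_all
  qed
qed

lemma C_inf_glue:
  fixes S :: "real set" and f :: "real \<Rightarrow> 'b::real_normed_vector"
  assumes "open A" "open B" "S \<subseteq> A \<union> B"
    and "C_inf (S \<inter> A) f" "C_inf (S \<inter> B) f"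
    and nontrivial: "\<And>x. x \<in> S \<Longrightarrow> at x within S \<noteq> bot"
  shows "C_inf S f"
proof -
  have local: "at x within S \<inter> N = at x within S" if "open N" "x \<in> N" for x N
    by (rule at_within_nhd[OF that(2,1)]) auto
  let ?X = "\<lambda>h. C_inf (S \<inter> A) h \<and> C_inf (S \<inter> B) h"
  show ?thesis
  proof (rule C_inf_real_coinduct[where X = ?X])
    show "?X f" using assms(4,5) ..
  next
    fix h :: "real \<Rightarrow> 'b" assume "?X h"
    then have hA: "C_inf (S \<inter> A) h" and hB: "C_inf (S \<inter> B) h" by auto
    obtain ga where ga: "\<forall>x\<in>S \<inter> A. (h has_vector_derivative ga x) (at x within S \<inter> A)" "C_inf (S \<inter> A) ga"
      using C_inf_realE[OF hA] by blast
    obtain gb where gb: "\<forall>x\<in>S \<inter> B. (h has_vector_derivative gb x) (at x within S \<inter> B)" "C_inf (S \<inter> B) gb"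
      using C_inf_realE[OF hB] by blast
    define g where "g x = (if x \<in> A then ga x else gb x)" for x
    have dA: "(h has_vector_derivative ga x) (at x within S)" if "x \<in> S" "x \<in> A" for x
      using ga(1) that local[OF assms(1) that(2)] by (metis IntI)
    have dB: "(h has_vector_derivative gb x) (at x within S)" if "x \<in> S" "x \<in> B" for x
      using gb(1) that local[OF assms(2) that(2)] by (metis IntI)
    have der: "\<forall>x\<in>S. (h has_vector_derivative g x) (at x within S)"
      using dA dB assms(3) unfolding g_def by auto
    then have "continuous_on S h"
      unfolding continuous_on_eq_continuous_within using has_vector_derivative_continuous by blast
    moreover have "C_inf (S \<inter> A) g" using ga(2) by (rule C_inf_cong) (auto simp: g_def)
    moreover have "C_inf (S \<inter> B) g"
    proof (rule C_inf_cong[OF gb(2)])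
      fix x assume x: "x \<in> S \<inter> B"
      show "gb x = g x"
        using vector_derivative_unique_within[OF nontrivial dA dB] x unfolding g_def by auto
    qed
    ultimately show "continuous_on S h \<and>
        (\<exists>g. (\<forall>x\<in>S. (h has_vector_derivative g x) (at x within S)) \<and> (?X g \<or> C_inf S g))"
      using der by blast
  qed
qed

lemma C_inf_glue_interval:
  fixes g1 g2 :: "real \<Rightarrow> 'b::real_normed_vector"
  assumes "C_inf {a..<b} g1" "C_inf {c..d} g2" "a \<le> c" "c < b" "b \<le> d"
    and agree: "\<forall>t\<in>{c..<b}. g1 t = g2 t"
  shows "C_inf {a..d} (\<lambda>t. if t \<le> c then g1 t else g2 t)"
proof (rule C_inf_glue[of "{..<b}" "{c<..}"])
  show "C_inf ({a..d} \<inter> {..<b}) (\<lambda>t. if t \<le> c then g1 t else g2 t)"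
    by (rule C_inf_cong[OF C_inf_subset[OF assms(1)]]) (use agree in auto)
  show "C_inf ({a..d} \<inter> {c<..}) (\<lambda>t. if t \<le> c then g1 t else g2 t)"
    by (rule C_inf_cong[OF C_inf_subset[OF assms(2)]]) auto
  show "at t within {a..d} \<noteq> bot" if "t \<in> {a..d}" for t
    using that assms(3-5) by (simp add: trivial_limit_within islimpt_Icc)
qed (use assms(4) in auto)

section \<open>Derivative bounds and Gronwall estimates\<close>

lemma mvt_interval_within:
  fixes f f' :: "real \<Rightarrow> real"
  assumes K: "is_interval K" and ab: "a \<in> K" "b \<in> K" "a \<le> b"
    and deriv: "\<forall>x\<in>K. (f has_real_derivative f' x) (at x within K)"
  obtains x where "x \<in> {a..b}" "f b - f a = f' x * (b - a)"
proof -
  have sub: "{a..b} \<subseteq> K" using mem_is_interval_1_I[OF K ab(1,2)] by auto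
  have "(f has_derivative (\<lambda>h. f' x * h)) (at x within {a..b})" if "a \<le> x" "x \<le> b" for x
  proof -
    have "x \<in> K" using sub that by auto
    with deriv have "(f has_derivative (*) (f' x)) (at x within K)" by (simp add: has_field_derivative_def)
    then show ?thesis using sub by (rule has_derivative_subset)
  qed
  from mvt_very_simple[OF ab(3) this] show thesis using that by (auto simp: mult.commute)
qed

lemma DERIV_within_pos_imp_less:
  fixes f f' :: "real \<Rightarrow> real"
  assumes "is_interval K" "\<forall>x\<in>K. (f has_real_derivative f' x) (at x within K)" "\<forall>x\<in>K. 0 < f' x"
    and "a \<in> K" "b \<in> K" "a < b"
  shows "f a < f b"
proof -
  obtain x where "x \<in> {a..b}" "f b - f a = f' x * (b - a)"
    using mvt_interval_within[OF assms(1,4,5) _ assms(2)] assms(6) by auto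
  moreover have "x \<in> K" using \<open>x \<in> {a..b}\<close> mem_is_interval_1_I[OF assms(1,4,5)] by auto
  then have "0 < f' x * (b - a)" using assms(3,6) by simp
  ultimately show ?thesis by linarith
qed

lemma vector_derivative_bound_imp_lipschitz:
  fixes z :: "real \<Rightarrow> 'a::real_normed_vector"
  assumes "convex S" "\<forall>t\<in>S. (z has_vector_derivative z' t) (at t within S)"
    and "\<forall>t\<in>S. norm (z' t) \<le> B" "0 \<le> B"
  shows "B-lipschitz_on S z"
proof (rule bounded_derivative_imp_lipschitz[OF _ assms(1) _ assms(4)])
  show "(z has_derivative (\<lambda>s. s *\<^sub>R z' t)) (at t within S)" if "t \<in> S" for t
    using assms(2) that by (simp add: has_vector_derivative_def)
  show "onorm (\<lambda>s. s *\<^sub>R z' t) \<le> B" if "t \<in> S" for t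
    using assms(3) that onorm_scaleR_left[OF bounded_linear_ident, of "z' t"] by (simp add: onorm_id)
qed

lemma C_inf_lipschitz_on_cball:
  fixes g :: "real \<Rightarrow> real"
  assumes "C_inf U g" "cball c r \<subseteq> U"
  obtains L where "L-lipschitz_on (cball c r) g"
proof -
  have "continuous_on (cball c r) (deriv_on U g)"
    using C_inf_imp_continuous_on[OF C_inf_deriv_on[OF assms(1)]] assms(2) by (rule continuous_on_subset)
  then have "bounded (deriv_on U g ` cball c r)"
    by (rule compact_imp_bounded[OF compact_continuous_image[OF _ compact_cball]])
  then obtain B where B: "\<forall>x\<in>cball c r. \<bar>deriv_on U g x\<bar> \<le> B" by (auto simp: bounded_iff)
  have "\<forall>x\<in>cball c r. (g has_vector_derivative deriv_on U g x) (at x within cball c r)"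
    using has_real_derivative_deriv_on[OF assms(1)] assms(2)
    by (auto simp: has_real_derivative_iff_has_vector_derivative[symmetric] intro: DERIV_subset)
  then have "(max B 0)-lipschitz_on (cball c r) g"
    using B by (intro vector_derivative_bound_imp_lipschitz) force+
  then show thesis by (rule that)
qed

lemma lipschitz_on_cball_bound:
  fixes g :: "real \<Rightarrow> real"
  assumes "L-lipschitz_on (cball c r) g" "x \<in> cball c r"
  shows "\<bar>g x\<bar> \<le> \<bar>g c\<bar> + L * r"
proof -
  have "dist (g x) (g c) \<le> L * dist x c"
    using lipschitz_onD[OF assms(1) assms(2)] assms(2) by (simp add: dist_real_def)
  also have "\<dots> \<le> L * r"
    using lipschitz_on_nonneg[OF assms(1)] assms(2) by (intro mult_left_mono) (auto simp: dist_commute)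
  finally show ?thesis by (simp add: dist_real_def)
qed

lemma gronwall_exp_mono:
  fixes \<phi> \<phi>' :: "real \<Rightarrow> real"
  assumes K: "is_interval K" and deriv: "\<forall>t\<in>K. (\<phi> has_real_derivative \<phi>' t) (at t within K)"
    and bound: "\<forall>t\<in>K. \<bar>\<phi>' t\<bar> \<le> C * \<phi> t"
    and st: "s \<in> K" "t \<in> K" "s \<le> t"
  shows "exp (- C * t) * \<phi> t \<le> exp (- C * s) * \<phi> s"
    and "exp (C * s) * \<phi> s \<le> exp (C * t) * \<phi> t"
proof -
  have "\<forall>u\<in>K. ((\<lambda>u. exp (- C * u) * \<phi> u) has_real_derivative exp (- C * u) * (\<phi>' u - C * \<phi> u)) (at u within K)"
    using deriv by (auto intro!: derivative_eq_intros simp: algebra_simps)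
  then obtain x where x: "x \<in> {s..t}"
    "exp (- C * t) * \<phi> t - exp (- C * s) * \<phi> s = exp (- C * x) * (\<phi>' x - C * \<phi> x) * (t - s)"
    by (rule mvt_interval_within[OF K st])
  have "x \<in> K" using x(1) mem_is_interval_1_I[OF K st(1,2)] by auto
  then have "\<phi>' x - C * \<phi> x \<le> 0" using bound by (auto dest: abs_le_D1)
  with x(2) st(3) show "exp (- C * t) * \<phi> t \<le> exp (- C * s) * \<phi> s"
    by (smt (verit) exp_gt_zero mult_nonneg_nonpos mult_nonpos_nonneg)
next
  have "\<forall>u\<in>K. ((\<lambda>u. exp (C * u) * \<phi> u) has_real_derivative exp (C * u) * (C * \<phi> u + \<phi>' u)) (at u within K)"
    using deriv by (auto intro!: derivative_eq_intros simp: algebra_simps)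
  then obtain x where x: "x \<in> {s..t}"
    "exp (C * t) * \<phi> t - exp (C * s) * \<phi> s = exp (C * x) * (C * \<phi> x + \<phi>' x) * (t - s)"
    by (rule mvt_interval_within[OF K st])
  have "x \<in> K" using x(1) mem_is_interval_1_I[OF K st(1,2)] by auto
  then have "0 \<le> C * \<phi> x + \<phi>' x" using bound by (auto dest: abs_le_D2)
  with x(2) st(3) show "exp (C * s) * \<phi> s \<le> exp (C * t) * \<phi> t"
    by (smt (verit) exp_gt_zero mult_nonneg_nonneg)
qed

lemma gronwall_zero:
  fixes \<phi> \<phi>' :: "real \<Rightarrow> real"
  assumes K: "is_interval K" "t0 \<in> K" and zero: "\<phi> t0 = 0"
    and deriv: "\<forall>t\<in>K. (\<phi> has_real_derivative \<phi>' t) (at t within K)"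
    and bound: "\<forall>t\<in>K. \<bar>\<phi>' t\<bar> \<le> C * \<phi> t" and nonneg: "\<forall>t\<in>K. 0 \<le> \<phi> t"
  shows "\<forall>t\<in>K. \<phi> t = 0"
proof
  fix t assume t: "t \<in> K"
  have "\<phi> t \<le> 0"
  proof (cases "t0 \<le> t")
    case True
    from gronwall_exp_mono(1)[OF K(1) deriv bound K(2) t True] zero show ?thesis
      by (simp add: mult_le_0_iff)
  next
    case False
    from gronwall_exp_mono(2)[OF K(1) deriv bound t K(2)] False zero show ?thesis
      by (simp add: mult_le_0_iff)
  qed
  with nonneg t show "\<phi> t = 0" by force
qed

lemma gronwall_zero_at_left_limit:
  fixes \<phi> \<phi>' :: "real \<Rightarrow> real"
  assumes deriv: "\<forall>t\<in>{c..<b}. (\<phi> has_real_derivative \<phi>' t) (at t within {c..<b})"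
    and bound: "\<forall>t\<in>{c..<b}. \<bar>\<phi>' t\<bar> \<le> C * \<phi> t" and nonneg: "\<forall>t\<in>{c..<b}. 0 \<le> \<phi> t"
    and lim: "(\<phi> \<longlongrightarrow> 0) (at_left b)"
  shows "\<forall>t\<in>{c..<b}. \<phi> t = 0"
proof
  fix t assume t: "t \<in> {c..<b}"
  have "eventually (\<lambda>s. s \<in> {t<..<b}) (at_left b)"
    using t by (intro eventually_at_left_real) auto
  then have "eventually (\<lambda>s. exp (C * t) * \<phi> t \<le> exp (C * s) * \<phi> s) (at_left b)"
    by eventually_elim (use t in \<open>auto intro: gronwall_exp_mono(2)[OF _ deriv bound] simp: is_interval_ic\<close>)
  moreover have "((\<lambda>s. exp (C * s) * \<phi> s) \<longlongrightarrow> exp (C * b) * 0) (at_left b)"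
    by (intro tendsto_intros lim)
  ultimately have "exp (C * t) * \<phi> t \<le> 0"
    using t by (intro tendsto_lowerbound) (auto simp: trivial_limit_at_left_real)
  with nonneg t show "\<phi> t = 0" by (force simp: mult_le_0_iff)
qed

section \<open>Local existence by Picard iteration\<close>

lemma integral_diff_bound:
  fixes g :: "real \<Rightarrow> 'a::banach"
  assumes "continuous_on {a..b} g" "c \<in> {a..b}" "s \<in> {a..b}"
    and bound: "\<And>u. u \<in> {a..b} \<Longrightarrow> norm (g u) \<le> M"
  shows "norm (integral {a..c} g - integral {a..s} g) \<le> M * \<bar>c - s\<bar>"
proof -
  have combine: "integral {a..x} g + integral {x..y} g = integral {a..y} g"
    and bnd: "norm (integral {x..y} g) \<le> M * (y - x)"
    if "x \<in> {a..b}" "y \<in> {a..b}" "x \<le> y" for x y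
  proof -
    have "continuous_on {a..y} g" "continuous_on {x..y} g"
      using that assms(1) by (auto elim!: continuous_on_subset)
    then show "integral {a..x} g + integral {x..y} g = integral {a..y} g"
      using that by (intro Henstock_Kurzweil_Integration.integral_combine integrable_continuous_real) auto
    show "norm (integral {x..y} g) \<le> M * (y - x)"
      using that \<open>continuous_on {x..y} g\<close> bound by (intro integral_bound) auto
  qed
  show ?thesis
  proof (cases "c \<le> s")
    case True
    with combine[of c s] assms(2,3) have "integral {a..c} g - integral {a..s} g = - integral {c..s} g"
      by (metis add_diff_cancel_left' minus_diff_eq)
    with bnd[of c s] True assms(2,3) show ?thesis by simp
  next
    case False
    with combine[of s c] assms(2,3) have "integral {a..c} g - integral {a..s} g = integral {s..c} g"
      by (metis add_diff_cancel_left' linear)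
    with bnd[of s c] False assms(2,3) show ?thesis by simp
  qed
qed

lemma picard_integral_dist:
  fixes F :: "'a::banach \<Rightarrow> 'a" and x y :: "real \<Rightarrow>\<^sub>C 'a"
  assumes lip: "L-lipschitz_on UNIV F" and c: "c \<in> {a..b}" and t0: "t0 \<in> {a..b}"
  shows "norm ((integral {a..c} (\<lambda>s. F (x s)) - integral {a..t0} (\<lambda>s. F (x s)))
      - (integral {a..c} (\<lambda>s. F (y s)) - integral {a..t0} (\<lambda>s. F (y s)))) \<le> L * dist x y * \<bar>c - t0\<bar>"
proof -
  have cF: "continuous_on S (\<lambda>s. F (apply_bcontfun z s))" for z :: "real \<Rightarrow>\<^sub>C 'a" and S
    by (rule continuous_on_compose2[OF lipschitz_on_continuous_on[OF lip]]) auto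
  let ?g = "\<lambda>s. F (x s) - F (y s)"
  have "(integral {a..c} (\<lambda>s. F (x s)) - integral {a..t0} (\<lambda>s. F (x s)))
      - (integral {a..c} (\<lambda>s. F (y s)) - integral {a..t0} (\<lambda>s. F (y s)))
      = integral {a..c} ?g - integral {a..t0} ?g"
    by (simp add: integral_diff integrable_continuous_real cF)
  also have "norm \<dots> \<le> L * dist x y * \<bar>c - t0\<bar>"
  proof (rule integral_diff_bound[OF _ c t0])
    show "continuous_on {a..b} ?g" by (intro continuous_intros cF)
    fix s
    have "norm (?g s) \<le> L * dist (x s) (y s)"
      using lipschitz_onD[OF lip] by (simp add: dist_norm)
    also have "\<dots> \<le> L * dist x y" using dist_bounded lipschitz_on_nonneg[OF lip] by (rule mult_left_mono)
    finally show "norm (?g s) \<le> L * dist x y" .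
  qed
  finally show ?thesis .
qed

text \<open>The Picard operator acts on bounded continuous functions on the whole line, which are read off
  on the time interval and extended constantly outside it.\<close>

lemma picard_local_existence:
  fixes F :: "'a::banach \<Rightarrow> 'a"
  assumes lip: "L-lipschitz_on UNIV F" and h: "0 < h" "h * L < 1"
  obtains z where "z t0 = z0"
    "\<forall>t\<in>{t0-h..t0+h}. (z has_vector_derivative F (z t)) (at t within {t0-h..t0+h})"
proof -
  define a b where "a = t0 - h" and "b = t0 + h"
  have t0: "t0 \<in> {a..b}" and clamp: "clamp a b t \<in> {a..b}" for t
    using h clamp_in_interval[of a b t] by (auto simp: a_def b_def)
  have L: "0 \<le> L" using lip by (rule lipschitz_on_nonneg)
  have cF: "continuous_on S (\<lambda>s. F (apply_bcontfun x s))" for x :: "real \<Rightarrow>\<^sub>C 'a" and S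
    by (rule continuous_on_compose2[OF lipschitz_on_continuous_on[OF lip]]) auto
  define P where "P x t = z0 + (integral {a..t} (\<lambda>s. F (x s)) - integral {a..t0} (\<lambda>s. F (x s)))" for x :: "real \<Rightarrow>\<^sub>C 'a" and t
  have "continuous_on {a..b} (P x)" for x
    unfolding P_def by (intro continuous_intros indefinite_integral_continuous_1 integrable_continuous_real cF)
  then have "\<exists>g :: real \<Rightarrow>\<^sub>C 'a. \<forall>t. g t = P x (clamp a b t)" for x
    using continuous_on_cbox_bcontfunE[of a b "P x"] by (metis box_real(2))
  then obtain \<Phi> :: "(real \<Rightarrow>\<^sub>C 'a) \<Rightarrow> (real \<Rightarrow>\<^sub>C 'a)" where \<Phi>: "\<And>x t. \<Phi> x t = P x (clamp a b t)"
    using choice[of "\<lambda>x g. \<forall>t. apply_bcontfun g t = P x (clamp a b t)"] by blast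
  have "dist (\<Phi> x) (\<Phi> y) \<le> (L * h) * dist x y" for x y
  proof (rule dist_bound)
    fix t
    have "dist (\<Phi> x t) (\<Phi> y t) \<le> L * dist x y * \<bar>clamp a b t - t0\<bar>"
      using picard_integral_dist[OF lip clamp t0, where x = x and y = y] by (simp add: \<Phi> P_def dist_norm)
    also have "\<dots> \<le> L * dist x y * h"
      using clamp[of t] L by (intro mult_left_mono) (auto simp: a_def b_def)
    finally show "dist (\<Phi> x t) (\<Phi> y t) \<le> (L * h) * dist x y" by (simp add: algebra_simps)
  qed
  then obtain x where fixed: "\<Phi> x = x"
    using banach_fix_type[of "L * h" \<Phi>] h L by (auto simp: mult.commute)
  have xP: "x t = P x t" if "t \<in> {a..b}" for t
    using \<Phi>[of x t] fixed clamp_cancel_cbox[of t a b] that by simp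
  have "x t0 = z0" using xP[OF t0] by (simp add: P_def)
  moreover have "(x has_vector_derivative F (x t)) (at t within {a..b})" if t: "t \<in> {a..b}" for t
  proof -
    have "(P x has_vector_derivative F (x t)) (at t within {a..b})"
      unfolding P_def by (auto intro!: derivative_eq_intros integral_has_vector_derivative[OF cF t])
    then show ?thesis using has_vector_derivative_transform[OF t, of x "P x"] xP by auto
  qed
  ultimately show thesis using that unfolding a_def b_def by blast
qed

section \<open>Hamiltonian systems with separated variables\<close>

definition hamiltonian_sol ::
  "(real \<Rightarrow> real) \<Rightarrow> (real \<Rightarrow> real) \<Rightarrow> real set \<Rightarrow> (real \<Rightarrow> real) \<Rightarrow> (real \<Rightarrow> real) \<Rightarrow> bool" where
  "hamiltonian_sol e f I q p \<longleftrightarrow>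
     (\<forall>t\<in>I. (q has_real_derivative e (p t)) (at t within I) \<and> (p has_real_derivative f (q t)) (at t within I))"

lemma hamiltonian_sol_subset:
  "hamiltonian_sol e f I q p \<Longrightarrow> J \<subseteq> I \<Longrightarrow> hamiltonian_sol e f J q p"
  unfolding hamiltonian_sol_def by (meson DERIV_subset subsetD)

lemma hamiltonian_sol_continuous_on:
  assumes "hamiltonian_sol e f I q p"
  shows "continuous_on I q" "continuous_on I p"
  using assms unfolding hamiltonian_sol_def by (auto intro!: DERIV_continuous_on)

lemma hamiltonian_sol_isCont:
  assumes "hamiltonian_sol e f I q p" "t \<in> interior I"
  shows "isCont q t" "isCont p t"
  using hamiltonian_sol_continuous_on[OF assms(1)] assms(2) by (auto simp: continuous_on_interior)

lemma hamiltonian_sol_strict_mono: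
  assumes sol: "hamiltonian_sol e f I q p" and I: "is_interval I" and pos: "\<forall>t\<in>I. 0 < f (q t)"
    and st: "s \<in> I" "t \<in> I" "s < t"
  shows "p s < p t"
proof (rule DERIV_within_pos_imp_less[where f = p and f' = "\<lambda>t. f (q t)", OF I _ pos st])
  show "\<forall>t\<in>I. (p has_real_derivative f (q t)) (at t within I)"
    using sol unfolding hamiltonian_sol_def by blast
qed

lemma hamiltonian_sol_sqdist_deriv:
  assumes sol1: "hamiltonian_sol e f K q1 p1" and sol2: "hamiltonian_sol e f K q2 p2"
    and lip: "L-lipschitz_on P e" "L-lipschitz_on Q f"
    and inside: "\<forall>t\<in>K. q1 t \<in> Q \<and> q2 t \<in> Q \<and> p1 t \<in> P \<and> p2 t \<in> P"
  obtains \<phi>' where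
    "\<forall>t\<in>K. ((\<lambda>t. (q1 t - q2 t)\<^sup>2 + (p1 t - p2 t)\<^sup>2) has_real_derivative \<phi>' t) (at t within K)"
    "\<forall>t\<in>K. \<bar>\<phi>' t\<bar> \<le> 2 * L * ((q1 t - q2 t)\<^sup>2 + (p1 t - p2 t)\<^sup>2)"
proof
  let ?\<phi>' = "\<lambda>t. 2 * (q1 t - q2 t) * (e (p1 t) - e (p2 t)) + 2 * (p1 t - p2 t) * (f (q1 t) - f (q2 t))"
  show "\<forall>t\<in>K. ((\<lambda>t. (q1 t - q2 t)\<^sup>2 + (p1 t - p2 t)\<^sup>2) has_real_derivative ?\<phi>' t) (at t within K)"
    using sol1 sol2 unfolding hamiltonian_sol_def by (auto intro!: derivative_eq_intros simp: algebra_simps)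
  show "\<forall>t\<in>K. \<bar>?\<phi>' t\<bar> \<le> 2 * L * ((q1 t - q2 t)\<^sup>2 + (p1 t - p2 t)\<^sup>2)"
  proof
    fix t assume t: "t \<in> K"
    define a b where "a = q1 t - q2 t" and "b = p1 t - p2 t"
    have "p1 t \<in> P" "p2 t \<in> P" "q1 t \<in> Q" "q2 t \<in> Q" using inside t by auto
    then have "dist (e (p1 t)) (e (p2 t)) \<le> L * dist (p1 t) (p2 t)"
      and "dist (f (q1 t)) (f (q2 t)) \<le> L * dist (q1 t) (q2 t)"
      by (simp_all add: lipschitz_onD[OF lip(1)] lipschitz_onD[OF lip(2)])
    then have u: "\<bar>e (p1 t) - e (p2 t)\<bar> \<le> L * \<bar>b\<bar>" and v: "\<bar>f (q1 t) - f (q2 t)\<bar> \<le> L * \<bar>a\<bar>"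
      by (simp_all add: a_def b_def dist_real_def)
    have L: "0 \<le> L" using lip(1) by (rule lipschitz_on_nonneg)
    have "\<bar>?\<phi>' t\<bar> \<le> 2 * \<bar>a\<bar> * \<bar>e (p1 t) - e (p2 t)\<bar> + 2 * \<bar>b\<bar> * \<bar>f (q1 t) - f (q2 t)\<bar>"
      unfolding a_def b_def by (rule order_trans[OF abs_triangle_ineq]) (simp only: abs_mult abs_numeral order_refl)
    also have "\<dots> \<le> 2 * \<bar>a\<bar> * (L * \<bar>b\<bar>) + 2 * \<bar>b\<bar> * (L * \<bar>a\<bar>)"
      by (intro add_mono mult_left_mono u v) auto
    also have "\<dots> = 2 * L * (2 * \<bar>a\<bar> * \<bar>b\<bar>)" by (simp add: algebra_simps)
    also have "\<dots> \<le> 2 * L * (a\<^sup>2 + b\<^sup>2)"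
      using sum_squares_bound[of "\<bar>a\<bar>" "\<bar>b\<bar>"] L by (intro mult_left_mono) simp_all
    finally show "\<bar>?\<phi>' t\<bar> \<le> 2 * L * ((q1 t - q2 t)\<^sup>2 + (p1 t - p2 t)\<^sup>2)"
      by (simp add: a_def b_def)
  qed
qed

lemma hamiltonian_sol_eq_on_interval:
  assumes K: "is_interval K" "t0 \<in> K" and agree: "q1 t0 = q2 t0" "p1 t0 = p2 t0"
    and sol1: "hamiltonian_sol e f K q1 p1" and sol2: "hamiltonian_sol e f K q2 p2"
    and lip: "L-lipschitz_on P e" "L-lipschitz_on Q f"
    and inside: "\<forall>t\<in>K. q1 t \<in> Q \<and> q2 t \<in> Q \<and> p1 t \<in> P \<and> p2 t \<in> P"
  shows "\<forall>t\<in>K. q1 t = q2 t \<and> p1 t = p2 t"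
proof -
  obtain \<phi>' where "\<forall>t\<in>K. ((\<lambda>t. (q1 t - q2 t)\<^sup>2 + (p1 t - p2 t)\<^sup>2) has_real_derivative \<phi>' t) (at t within K)"
    "\<forall>t\<in>K. \<bar>\<phi>' t\<bar> \<le> 2 * L * ((q1 t - q2 t)\<^sup>2 + (p1 t - p2 t)\<^sup>2)"
    by (rule hamiltonian_sol_sqdist_deriv[OF sol1 sol2 lip inside])
  from gronwall_zero[OF K _ this] agree
  have "\<forall>t\<in>K. (q1 t - q2 t)\<^sup>2 + (p1 t - p2 t)\<^sup>2 = 0" by simp
  then show ?thesis by (simp add: sum_power2_eq_zero_iff)
qed

lemma hamiltonian_sol_eq_at_left_limit:
  assumes sol1: "hamiltonian_sol e f {c..<b} q1 p1" and sol2: "hamiltonian_sol e f {c..<b} q2 p2"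
    and lip: "L-lipschitz_on P e" "L-lipschitz_on Q f"
    and inside: "\<forall>t\<in>{c..<b}. q1 t \<in> Q \<and> q2 t \<in> Q \<and> p1 t \<in> P \<and> p2 t \<in> P"
    and lim: "((\<lambda>t. q1 t - q2 t) \<longlongrightarrow> 0) (at_left b)" "((\<lambda>t. p1 t - p2 t) \<longlongrightarrow> 0) (at_left b)"
  shows "\<forall>t\<in>{c..<b}. q1 t = q2 t \<and> p1 t = p2 t"
proof -
  obtain \<phi>' where "\<forall>t\<in>{c..<b}. ((\<lambda>t. (q1 t - q2 t)\<^sup>2 + (p1 t - p2 t)\<^sup>2) has_real_derivative \<phi>' t)
      (at t within {c..<b})"
    "\<forall>t\<in>{c..<b}. \<bar>\<phi>' t\<bar> \<le> 2 * L * ((q1 t - q2 t)\<^sup>2 + (p1 t - p2 t)\<^sup>2)"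
    by (rule hamiltonian_sol_sqdist_deriv[OF sol1 sol2 lip inside])
  moreover have "((\<lambda>t. (q1 t - q2 t)\<^sup>2 + (p1 t - p2 t)\<^sup>2) \<longlongrightarrow> 0) (at_left b)"
    using tendsto_add[OF tendsto_power[OF lim(1), of 2] tendsto_power[OF lim(2), of 2]] by simp
  ultimately have "\<forall>t\<in>{c..<b}. (q1 t - q2 t)\<^sup>2 + (p1 t - p2 t)\<^sup>2 = 0"
    by (intro gronwall_zero_at_left_limit) auto
  then show ?thesis by (simp add: sum_power2_eq_zero_iff)
qed

lemma hamiltonian_sol_eq_near:
  assumes I: "is_interval I" "s \<in> I" and agree: "q1 s = q2 s" "p1 s = p2 s"
    and r: "0 < r" and lip: "L-lipschitz_on (cball pc r) e" "L-lipschitz_on (cball qc r) f"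
    and sol1: "hamiltonian_sol e f I q1 p1" and sol2: "hamiltonian_sol e f I q2 p2"
    and half: "\<forall>t\<in>I. q2 t \<in> cball qc (r/2) \<and> p2 t \<in> cball pc (r/2)"
  obtains d where "0 < d" "\<forall>t\<in>I. dist t s < d \<longrightarrow> q1 t = q2 t \<and> p1 t = p2 t"
proof -
  note cont = hamiltonian_sol_continuous_on[OF sol1]
  obtain d1 where d1: "d1 > 0" "\<forall>t\<in>I. dist t s < d1 \<longrightarrow> dist (q1 t) (q1 s) < r/2"
    using cont(1) I(2) r unfolding continuous_on_iff by (metis half_gt_zero)
  obtain d2 where d2: "d2 > 0" "\<forall>t\<in>I. dist t s < d2 \<longrightarrow> dist (p1 t) (p1 s) < r/2"
    using cont(2) I(2) r unfolding continuous_on_iff by (metis half_gt_zero)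
  define K where "K = I \<inter> ball s (min d1 d2)"
  have inside: "\<forall>t\<in>K. q1 t \<in> cball qc r \<and> q2 t \<in> cball qc r \<and> p1 t \<in> cball pc r \<and> p2 t \<in> cball pc r"
  proof
    fix t assume t: "t \<in> K"
    then have "dist (q1 t) (q2 s) < r/2" "dist (p1 t) (p2 s) < r/2"
      using d1 d2 agree by (auto simp: K_def dist_commute)
    moreover have "q2 s \<in> cball qc (r/2)" "p2 s \<in> cball pc (r/2)" "q2 t \<in> cball qc (r/2)" "p2 t \<in> cball pc (r/2)"
      using half I(2) t by (auto simp: K_def)
    ultimately show "q1 t \<in> cball qc r \<and> q2 t \<in> cball qc r \<and> p1 t \<in> cball pc r \<and> p2 t \<in> cball pc r"
      using dist_triangle[of qc "q1 t" "q2 s"] dist_triangle[of pc "p1 t" "p2 s"] r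
      unfolding mem_cball by (simp add: dist_commute)
  qed
  have K: "is_interval K" "s \<in> K"
    using I d1 d2 by (auto simp: K_def is_interval_Int is_interval_ball_real)
  have "hamiltonian_sol e f K q1 p1" "hamiltonian_sol e f K q2 p2"
    using sol1 sol2 by (auto intro: hamiltonian_sol_subset simp: K_def)
  then have "\<forall>t\<in>K. q1 t = q2 t \<and> p1 t = p2 t"
    using hamiltonian_sol_eq_on_interval[OF K agree _ _ lip inside] by blast
  then show thesis
    using d1 d2 by (intro that[of "min d1 d2"]) (auto simp: K_def dist_commute)
qed

lemma hamiltonian_sol_unique:
  assumes I: "is_interval I" "t0 \<in> I" and agree: "q1 t0 = q2 t0" "p1 t0 = p2 t0"
    and r: "0 < r" and lip: "L-lipschitz_on (cball pc r) e" "L-lipschitz_on (cball qc r) f"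
    and sol1: "hamiltonian_sol e f I q1 p1" and sol2: "hamiltonian_sol e f I q2 p2"
    and half: "\<forall>t\<in>I. q2 t \<in> cball qc (r/2) \<and> p2 t \<in> cball pc (r/2)"
  shows "\<forall>t\<in>I. q1 t = q2 t \<and> p1 t = p2 t"
proof -
  define A where "A = {t\<in>I. q1 t = q2 t \<and> p1 t = p2 t}"
  have "A = {t\<in>I. (q1 t - q2 t, p1 t - p2 t) = (0, 0)}" by (auto simp: A_def)
  then have closed: "closedin (top_of_set I) A"
    using hamiltonian_sol_continuous_on[OF sol1] hamiltonian_sol_continuous_on[OF sol2]
    by (simp only:) (intro continuous_closedin_preimage_constant continuous_intros)
  have "openin (top_of_set I) A"
    unfolding openin_euclidean_subtopology_iff
  proof (intro conjI ballI)
    fix s assume "s \<in> A"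
    then have "s \<in> I" "q1 s = q2 s" "p1 s = p2 s" by (auto simp: A_def)
    then obtain d where "0 < d" "\<forall>t\<in>I. dist t s < d \<longrightarrow> q1 t = q2 t \<and> p1 t = p2 t"
      using hamiltonian_sol_eq_near[OF I(1) _ _ _ r lip sol1 sol2 half] by blast
    then show "\<exists>d>0. \<forall>t\<in>I. dist t s < d \<longrightarrow> t \<in> A" by (auto simp: A_def)
  qed (auto simp: A_def)
  then have "A = I"
    using connected_clopen[THEN iffD1, OF is_interval_connected[OF I(1)]] closed I(2) agree
    by (metis (mono_tags, lifting) A_def empty_iff mem_Collect_eq)
  then show ?thesis by (auto simp: A_def)
qed

lemma has_vector_derivative_fst_snd:
  assumes "(z has_vector_derivative (a, b)) F"
  shows "((\<lambda>t. fst (z t)) has_real_derivative a) F" "((\<lambda>t. snd (z t)) has_real_derivative b) F"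
  using has_derivative_fst[OF assms[unfolded has_vector_derivative_def]]
    has_derivative_snd[OF assms[unfolded has_vector_derivative_def]]
  by (simp_all add: has_real_derivative_iff_has_vector_derivative has_vector_derivative_def)

text \<open>Clamping to the box of radius r turns the locally Lipschitz field into a globally Lipschitz and
  bounded one.\<close>

lemma hamiltonian_field_clamped:
  fixes e f :: "real \<Rightarrow> real"
  assumes r: "0 < r" and lip: "L-lipschitz_on (cball p0 r) e" "L-lipschitz_on (cball q0 r) f"
  obtains F B where "(2 * L)-lipschitz_on UNIV F" "\<forall>z. norm (F z) \<le> B" "0 \<le> B"
    "\<forall>z\<in>cball q0 r \<times> cball p0 r. F z = (e (snd z), f (fst z))"
proof -
  define lo hi where "lo = (q0 - r, p0 - r)" and "hi = (q0 + r, p0 + r)"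
  have L: "0 \<le> L" using lip(1) by (rule lipschitz_on_nonneg)
  have box: "cbox lo hi = cball q0 r \<times> cball p0 r"
    by (simp add: lo_def hi_def cbox_Pair_eq cball_eq_atLeastAtMost)
  have "lo \<bullet> i \<le> hi \<bullet> i" if "i \<in> Basis" for i
    using that r by (auto simp: lo_def hi_def Basis_prod_def)
  then have clamp_box: "clamp lo hi z \<in> cball q0 r \<times> cball p0 r" for z
    using clamp_in_interval[of lo hi z] box by simp
  define F where "F z = (e (snd (clamp lo hi z)), f (fst (clamp lo hi z)))" for z
  have "(2 * L)-lipschitz_on UNIV F"
  proof (rule lipschitz_onI)
    fix x y :: "real \<times> real"
    let ?x = "clamp lo hi x" and ?y = "clamp lo hi y"
    have "dist (F x) (F y) \<le> dist (e (snd ?x)) (e (snd ?y)) + dist (f (fst ?x)) (f (fst ?y))"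
      unfolding F_def dist_norm by (rule order_trans[OF _ norm_Pair_le]) simp
    also have "\<dots> \<le> L * dist (snd ?x) (snd ?y) + L * dist (fst ?x) (fst ?y)"
      using clamp_box[of x] clamp_box[of y]
      by (intro add_mono lipschitz_onD[OF lip(1)] lipschitz_onD[OF lip(2)]) auto
    also have "\<dots> \<le> L * dist x y + L * dist x y"
      using dist_clamps_le_dist_args[of lo hi x y] dist_fst_le[of ?x ?y] dist_snd_le[of ?x ?y] L
      by (intro add_mono mult_left_mono) auto
    finally show "dist (F x) (F y) \<le> 2 * L * dist x y" by simp
  qed (use L in simp)
  moreover have "norm (F z) \<le> \<bar>e p0\<bar> + \<bar>f q0\<bar> + 2 * L * r" for z
  proof -
    have "norm (F z) \<le> \<bar>e (snd (clamp lo hi z))\<bar> + \<bar>f (fst (clamp lo hi z))\<bar>"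
      unfolding F_def using norm_Pair_le[of "e (snd (clamp lo hi z))" "f (fst (clamp lo hi z))"] by simp
    also have "\<dots> \<le> (\<bar>e p0\<bar> + L * r) + (\<bar>f q0\<bar> + L * r)"
      using clamp_box[of z]
      by (intro add_mono lipschitz_on_cball_bound[OF lip(1)] lipschitz_on_cball_bound[OF lip(2)]) auto
    finally show ?thesis by simp
  qed
  moreover have "0 \<le> \<bar>e p0\<bar> + \<bar>f q0\<bar> + 2 * L * r" using L r by simp
  moreover have "F z = (e (snd z), f (fst z))" if "z \<in> cball q0 r \<times> cball p0 r" for z
    using that box by (simp add: F_def)
  ultimately show thesis using that by blast
qed

lemma hamiltonian_sol_local_existence:
  fixes e f :: "real \<Rightarrow> real"
  assumes r: "0 < r" and lip: "L-lipschitz_on (cball p0 r) e" "L-lipschitz_on (cball q0 r) f"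
  obtains h qs ps where "0 < h" "hamiltonian_sol e f {t0-h..t0+h} qs ps" "qs t0 = q0" "ps t0 = p0"
    "\<forall>t\<in>{t0-h..t0+h}. qs t \<in> cball q0 (r/2) \<and> ps t \<in> cball p0 (r/2)"
proof -
  obtain F B where F_lip: "(2 * L)-lipschitz_on UNIV F" and F_bound: "\<forall>z. norm (F z) \<le> B" and B: "0 \<le> B"
    and F_box: "\<forall>z\<in>cball q0 r \<times> cball p0 r. F z = (e (snd z), f (fst z))"
    by (rule hamiltonian_field_clamped[OF r lip])
  have L: "0 \<le> L" using lip(1) by (rule lipschitz_on_nonneg)
  define h where "h = min (r / (2 * (B + 1))) (1 / (4 * L + 1))"
  have h: "0 < h" using r B L by (simp add: h_def)
  have hL: "h * (2 * L) < 1"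
  proof -
    have "h * (2 * L) \<le> 1 / (4 * L + 1) * (2 * L)" using L by (intro mult_right_mono) (auto simp: h_def)
    also have "\<dots> < 1" using L by (simp add: field_simps)
    finally show ?thesis .
  qed
  have hB: "B * h \<le> r / 2"
  proof -
    have "B * h \<le> (B + 1) * (r / (2 * (B + 1)))" using B h by (intro mult_mono) (auto simp: h_def)
    also have "\<dots> = r / 2" using B by (simp add: field_simps)
    finally show ?thesis .
  qed
  define I where "I = {t0-h..t0+h}"
  obtain z where z0: "z t0 = (q0, p0)" and z': "\<forall>t\<in>I. (z has_vector_derivative F (z t)) (at t within I)"
    using picard_local_existence[OF F_lip h hL] unfolding I_def by metis
  have "B-lipschitz_on I z"
    by (rule vector_derivative_bound_imp_lipschitz[OF _ z' _ B]) (auto simp: I_def F_bound)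
  then have near: "dist (z t) (q0, p0) \<le> r / 2" if "t \<in> I" for t
  proof -
    have "dist (z t) (z t0) \<le> B * dist t t0"
      using \<open>B-lipschitz_on I z\<close> that h by (intro lipschitz_onD) (auto simp: I_def)
    also have "\<dots> \<le> B * h" using that B by (intro mult_left_mono) (auto simp: I_def dist_real_def)
    finally show ?thesis using hB z0 by simp
  qed
  have half: "fst (z t) \<in> cball q0 (r/2) \<and> snd (z t) \<in> cball p0 (r/2)" if "t \<in> I" for t
    using near[OF that] dist_fst_le[of "z t" "(q0, p0)"] dist_snd_le[of "z t" "(q0, p0)"]
    by (simp add: dist_commute)
  have "F (z t) = (e (snd (z t)), f (fst (z t)))" if "t \<in> I" for t
  proof -
    have "z t \<in> cball q0 r \<times> cball p0 r" using half[OF that] r by (auto simp: mem_Times_iff)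
    then show ?thesis by (rule bspec[OF F_box])
  qed
  then have "hamiltonian_sol e f I (\<lambda>t. fst (z t)) (\<lambda>t. snd (z t))"
    using z' unfolding hamiltonian_sol_def by (metis has_vector_derivative_fst_snd)
  moreover have "fst (z t0) = q0" "snd (z t0) = p0" using z0 by simp_all
  ultimately show thesis using that[OF h] half unfolding I_def by blast
qed

inductive_set trajectory_product_sums ::
  "real set \<Rightarrow> (real \<Rightarrow> real) \<Rightarrow> (real \<Rightarrow> real) \<Rightarrow> (real \<Rightarrow> real) set"
  for U :: "real set" and q p :: "real \<Rightarrow> real" where
  prod: "C_inf UNIV a \<Longrightarrow> C_inf U b \<Longrightarrow> (\<lambda>t. a (q t) * b (p t)) \<in> trajectory_product_sums U q p"
| add: "h \<in> trajectory_product_sums U q p \<Longrightarrow> k \<in> trajectory_product_sums U q p \<Longrightarrow>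
    (\<lambda>t. h t + k t) \<in> trajectory_product_sums U q p"

text \<open>Along a solution, a(q) b(p) has derivative a'(q) (e b)(p) + (a f)(q) b'(p), again of this form.\<close>

lemma trajectory_product_sums_deriv:
  assumes U: "open U" "C_inf U e" "C_inf UNIV f" and pU: "\<forall>t\<in>I. p t \<in> U"
    and sol: "hamiltonian_sol e f I q p"
    and "h \<in> trajectory_product_sums U q p"
  obtains h' where "\<forall>t\<in>I. (h has_real_derivative h' t) (at t within I)" "h' \<in> trajectory_product_sums U q p"
  using assms(6)
proof (induction arbitrary: thesis)
  case (prod a b)
  let ?h' = "\<lambda>t. deriv_on UNIV a (q t) * (e (p t) * b (p t)) + (a (q t) * f (q t)) * deriv_on U b (p t)"
  have "((\<lambda>t. a (q t) * b (p t)) has_real_derivative ?h' t) (at t within I)" if "t \<in> I" for t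
  proof -
    have "(a has_real_derivative deriv_on UNIV a (q t)) (at (q t))"
      by (rule has_real_derivative_deriv_on_open[OF open_UNIV prod.hyps(1) UNIV_I])
    moreover have "(b has_real_derivative deriv_on U b (p t)) (at (p t))"
      using pU that by (intro has_real_derivative_deriv_on_open[OF U(1) prod.hyps(2)]) auto
    ultimately show ?thesis
      using sol that unfolding hamiltonian_sol_def
      by (auto intro!: derivative_eq_intros DERIV_chain2[where f = a] DERIV_chain2[where f = b]
          simp: algebra_simps)
  qed
  moreover have "?h' \<in> trajectory_product_sums U q p"
    using prod.hyps U by (intro trajectory_product_sums.intros C_inf_deriv_on C_inf_mult)
  ultimately show ?case by (intro prod.prems) auto
next
  case (add h k)
  obtain h' where h': "\<forall>t\<in>I. (h has_real_derivative h' t) (at t within I)" "h' \<in> trajectory_product_sums U q p"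
    by (rule add.IH(1))
  obtain k' where k': "\<forall>t\<in>I. (k has_real_derivative k' t) (at t within I)" "k' \<in> trajectory_product_sums U q p"
    by (rule add.IH(2))
  have "\<forall>t\<in>I. ((\<lambda>t. h t + k t) has_real_derivative h' t + k' t) (at t within I)"
    using h'(1) k'(1) by (simp add: DERIV_add)
  moreover have "(\<lambda>t. h' t + k' t) \<in> trajectory_product_sums U q p"
    using h'(2) k'(2) by (rule trajectory_product_sums.add)
  ultimately show ?case by (rule add.prems)
qed

lemma hamiltonian_sol_C_inf:
  assumes U: "open U" "C_inf U e" "C_inf UNIV f" and pU: "\<forall>t\<in>I. p t \<in> U"
    and sol: "hamiltonian_sol e f I q p"
  shows "C_inf I (\<lambda>t. (q t, p t))"
proof -
  have smooth: "C_inf I h" if "h \<in> trajectory_product_sums U q p" for h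
    using that
  proof (rule C_inf_real_coinduct[where X = "\<lambda>h. h \<in> trajectory_product_sums U q p"])
    fix h assume "h \<in> trajectory_product_sums U q p"
    then obtain h' where h': "\<forall>t\<in>I. (h has_real_derivative h' t) (at t within I)"
      "h' \<in> trajectory_product_sums U q p"
      by (rule trajectory_product_sums_deriv[OF U pU sol])
    have "continuous_on I h"
      by (rule DERIV_continuous_on) (use h'(1) in blast)
    moreover have "\<forall>t\<in>I. (h has_vector_derivative h' t) (at t within I)"
      using h'(1) by (simp add: has_real_derivative_iff_has_vector_derivative)
    ultimately show "continuous_on I h \<and> (\<exists>g. (\<forall>t\<in>I. (h has_vector_derivative g t) (at t within I))
        \<and> (g \<in> trajectory_product_sums U q p \<or> C_inf I g))"
      using h'(2) by blast
  qed
  have "(\<lambda>t. (\<lambda>x. x) (q t) * (\<lambda>x. 1) (p t)) \<in> trajectory_product_sums U q p"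
    "(\<lambda>t. (\<lambda>x. 1) (q t) * (\<lambda>x. x) (p t)) \<in> trajectory_product_sums U q p"
    by (intro trajectory_product_sums.prod C_inf_id C_inf_const)+
  from smooth[OF this(1)] smooth[OF this(2)] show ?thesis
    by (intro C_inf_pair) simp_all
qed

section \<open>Crossing of the bands\<close>

lemma flow_sol_iff_hamiltonian_sol:
  assumes "\<forall>t\<in>I. (E has_real_derivative e (p t)) (at (p t))"
  shows "flow_sol E W I q p \<longleftrightarrow> hamiltonian_sol e (\<lambda>x. - deriv W x) I q p"
  using assms unfolding flow_sol_def hamiltonian_sol_def by (metis DERIV_unique)

lemma bloch_gap_Suc_pos:
  assumes A1: "\<forall>k\<in>U. k \<noteq> pstar \<longrightarrow> bloch_E V n k \<noteq> bloch_E V (Suc n) k"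
    and A2: "\<exists>M>0. \<forall>k\<in>closure U. \<forall>m. 1 \<le> m \<and> m \<noteq> n \<and> m \<noteq> Suc n \<longrightarrow>
                \<bar>bloch_E V m k - bloch_E V (Suc n) k\<bar> \<ge> M \<and> \<bar>bloch_E V n k - bloch_E V m k\<bar> \<ge> M"
    and n: "1 \<le> n" and k: "k \<in> U" "k \<noteq> pstar"
  shows "bloch_gap V (Suc n) k > 0"
proof -
  obtain M where M: "M > 0" "\<forall>k\<in>closure U. \<forall>m. 1 \<le> m \<and> m \<noteq> n \<and> m \<noteq> Suc n \<longrightarrow>
      \<bar>bloch_E V m k - bloch_E V (Suc n) k\<bar> \<ge> M"
    using A2 by blast
  define c where "c = min M \<bar>bloch_E V (Suc n) k - bloch_E V n k\<bar>"
  have c: "c > 0" using M(1) A1 k by (auto simp: c_def)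
  have "c \<le> \<bar>bloch_E V (Suc n) k - bloch_E V m k\<bar>" if "1 \<le> m" "m \<noteq> Suc n" for m
  proof (cases "m = n")
    case False
    then show ?thesis
      using M(2) closure_subset k(1) that by (fastforce simp: c_def abs_minus_commute)
  qed (simp add: c_def)
  then have "c \<le> bloch_gap V (Suc n) k"
    unfolding bloch_gap_def using n by (intro cInf_greatest) auto
  with c show ?thesis by linarith
qed

lemma lipschitz_neighbourhoods:
  fixes e f :: "real \<Rightarrow> real"
  assumes U: "open U" "pstar \<in> U" and smooth: "C_inf U e" "C_inf UNIV f" and pos: "0 < f qstar"
  obtains r L where "0 < r" "cball pstar r \<subseteq> U"
    "L-lipschitz_on (cball pstar r) e" "L-lipschitz_on (cball qstar r) f" "\<forall>x\<in>cball qstar r. 0 < f x"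
proof -
  obtain d where d: "0 < d" "\<forall>x\<in>UNIV. dist x qstar < d \<longrightarrow> dist (f x) (f qstar) < f qstar"
    using C_inf_imp_continuous_on[OF smooth(2)] pos unfolding continuous_on_iff by blast
  have f_pos: "0 < f x" if "dist x qstar < d" for x
    using d(2) that pos by (auto simp: dist_real_def)
  obtain r' where r': "0 < r'" "cball pstar r' \<subseteq> U" using open_contains_cball U by blast
  define r where "r = min (d/2) r'"
  have r: "0 < r" "cball pstar r \<subseteq> U" using d r' subset_cball[of r r' pstar] by (auto simp: r_def)
  obtain L1 where L1: "L1-lipschitz_on (cball pstar r) e"
    by (rule C_inf_lipschitz_on_cball[OF smooth(1) r(2)])
  obtain L2 where L2: "L2-lipschitz_on (cball qstar r) f"
    by (rule C_inf_lipschitz_on_cball[OF smooth(2) subset_UNIV])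
  have "\<forall>x\<in>cball qstar r. 0 < f x"
    using d(1) by (auto simp: r_def dist_commute intro!: f_pos)
  moreover have "(max L1 L2)-lipschitz_on (cball pstar r) e" "(max L1 L2)-lipschitz_on (cball qstar r) f"
    by (auto intro: lipschitz_on_le[OF L1] lipschitz_on_le[OF L2])
  ultimately show thesis using that r by blast
qed

lemma hamiltonian_sol_smooth_branch:
  fixes e f :: "real \<Rightarrow> real"
  assumes U: "open U" "C_inf U e" "C_inf UNIV f" and r: "0 < r" "cball pstar r \<subseteq> U"
    and lip: "L-lipschitz_on (cball pstar r) e" "L-lipschitz_on (cball qstar r) f"
    and f_pos: "\<forall>x\<in>cball qstar r. 0 < f x"
  obtains h qs ps where "0 < h" "hamiltonian_sol e f {t0-h..t0+h} qs ps" "qs t0 = qstar" "ps t0 = pstar"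
    "\<forall>t\<in>{t0-h..t0+h}. qs t \<in> cball qstar (r/2) \<and> ps t \<in> cball pstar (r/2)"
    "C_inf {t0-h..t0+h} (\<lambda>t. (qs t, ps t))"
    "\<forall>s\<in>{t0-h..t0+h}. \<forall>t\<in>{t0-h..t0+h}. s < t \<longrightarrow> ps s < ps t"
    "(qs \<longlongrightarrow> qstar) (at t0)" "(ps \<longlongrightarrow> pstar) (at t0)"
proof -
  obtain h qs ps where h: "0 < h" and sol: "hamiltonian_sol e f {t0-h..t0+h} qs ps"
    and start: "qs t0 = qstar" "ps t0 = pstar"
    and half: "\<forall>t\<in>{t0-h..t0+h}. qs t \<in> cball qstar (r/2) \<and> ps t \<in> cball pstar (r/2)"
    by (rule hamiltonian_sol_local_existence[OF r(1) lip])
  define I where "I = {t0-h..t0+h}"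
  have balls: "qs t \<in> cball qstar r" "ps t \<in> cball pstar r" if "t \<in> I" for t
    using half that r(1) unfolding I_def by fastforce+
  have "C_inf I (\<lambda>t. (qs t, ps t))"
    using hamiltonian_sol_C_inf[OF U] balls r(2) sol unfolding I_def by blast
  moreover have "\<forall>s\<in>I. \<forall>t\<in>I. s < t \<longrightarrow> ps s < ps t"
    using hamiltonian_sol_strict_mono[OF sol] balls f_pos by (auto simp: I_def)
  moreover have "t0 \<in> interior I" using h by (simp add: I_def)
  then have "isCont qs t0" "isCont ps t0" using hamiltonian_sol_isCont sol I_def by blast+
  ultimately show thesis
    using that[OF h sol start half] start unfolding I_def by (simp add: isCont_def)
qed

lemma flow_sol_before_crossing:
  assumes sol: "flow_sol E W {0..<tstar} q p" and tstar: "0 < tstar"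
    and lim: "(q \<longlongrightarrow> qstar) (at_left tstar)" "(p \<longlongrightarrow> pstar) (at_left tstar)"
    and r: "0 < r" and force: "\<forall>x\<in>cball qstar r. 0 < - deriv W x"
    and E': "\<And>k. k \<in> cball pstar r \<Longrightarrow> k < pstar \<Longrightarrow> (E has_real_derivative e k) (at k)"
  obtains c where "0 \<le> c" "c < tstar" "hamiltonian_sol e (\<lambda>x. - deriv W x) {c<..<tstar} q p"
    "\<forall>t\<in>{c<..<tstar}. q t \<in> cball qstar r \<and> p t \<in> cball pstar r \<and> p t < pstar"
proof -
  have "eventually (\<lambda>t. dist (q t) qstar < r \<and> dist (p t) pstar < r) (at_left tstar)"
    using lim r by (auto simp: tendsto_iff intro: eventually_conj)
  then obtain c0 where c0: "c0 < tstar" "\<forall>t>c0. t < tstar \<longrightarrow> dist (q t) qstar < r \<and> dist (p t) pstar < r"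
    by (auto simp: eventually_at_left_field)
  define c where "c = max c0 0"
  define K where "K = {c<..<tstar}"
  have c: "0 \<le> c" "c < tstar" using c0 tstar by (auto simp: c_def)
  have K: "is_interval K" "K \<subseteq> {0..<tstar}" using c by (auto simp: K_def is_interval_convex_1)
  have balls: "q t \<in> cball qstar r" "p t \<in> cball pstar r" if "t \<in> K" for t
    using c0 that by (auto simp: K_def c_def dist_commute)
  have sol_flow: "\<forall>t\<in>K. (\<exists>D. (E has_real_derivative D) (at (p t)) \<and> (q has_real_derivative D) (at t within K))
      \<and> (p has_real_derivative - deriv W (q t)) (at t within K)"
    using sol K(2) unfolding flow_sol_def by (meson DERIV_subset subsetD)
  have p_less: "p t < pstar" if t: "t \<in> K" for t
  proof -
    have incr: "p u < p v" if "u \<in> K" "v \<in> K" "u < v" for u v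
    proof (rule DERIV_within_pos_imp_less[where f = p and f' = "\<lambda>x. - deriv W (q x)", OF K(1) _ _ that])
      show "\<forall>x\<in>K. (p has_real_derivative - deriv W (q x)) (at x within K)" using sol_flow by blast
      show "\<forall>x\<in>K. 0 < - deriv W (q x)" using balls force by blast
    qed
    define s where "s = (t + tstar) / 2"
    have s: "s \<in> K" "t < s" using t by (auto simp: K_def s_def)
    have "eventually (\<lambda>u. p s \<le> p u) (at_left tstar)"
      using s by (auto simp: K_def eventually_at_left_field intro!: exI[of _ s] less_imp_le incr)
    then have "p s \<le> pstar" by (rule tendsto_lowerbound[OF lim(2)]) (simp add: trivial_limit_at_left_real)
    with incr[OF t s(1,2)] show ?thesis by simp
  qed
  show thesis
  proof (rule that[OF c])
    show "hamiltonian_sol e (\<lambda>x. - deriv W x) {c<..<tstar} q p"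
      unfolding hamiltonian_sol_def K_def[symmetric]
      using sol_flow balls p_less E' by (metis DERIV_unique)
    show "\<forall>t\<in>{c<..<tstar}. q t \<in> cball qstar r \<and> p t \<in> cball pstar r \<and> p t < pstar"
      using balls p_less by (simp add: K_def)
  qed
qed

theorem proposition3p7:
  fixes V W :: "real \<Rightarrow> real"
    and n :: nat
    and U :: "real set"
    and pstar qstar q0 p0 tstar :: real
    and q p :: "real \<Rightarrow> real"
    and Eplus Eminus :: "real \<Rightarrow> real"
  assumes V_smooth: "C_inf UNIV V"
    and V_per: "\<forall>z. V (z + 1) = V z"
    and W_smooth: "C_inf UNIV W"
    and W_bdd: "\<forall>k. bounded (range ((deriv ^^ k) W))"
    and n_pos: "1 \<le> n"
    and U_open: "open U" and pstar_U: "pstar \<in> U"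
    and Eplus_def: "Eplus = (\<lambda>k. if k < pstar then bloch_E V n k else bloch_E V (Suc n) k)"
    and Eminus_def: "Eminus = (\<lambda>k. if k < pstar then bloch_E V (Suc n) k else bloch_E V n k)"
    and A1: "bloch_E V n pstar = bloch_E V (Suc n) pstar"
            "\<forall>k\<in>U. k \<noteq> pstar \<longrightarrow> bloch_E V n k \<noteq> bloch_E V (Suc n) k"
    and A2: "\<exists>M>0. \<forall>k\<in>closure U. \<forall>m. 1 \<le> m \<and> m \<noteq> n \<and> m \<noteq> Suc n \<longrightarrow>
                \<bar>bloch_E V m k - bloch_E V (Suc n) k\<bar> \<ge> M \<and> \<bar>bloch_E V n k - bloch_E V m k\<bar> \<ge> M"
    and A3: "C_inf U Eplus" "C_inf U Eminus"
            "\<exists>chi_plus chi_minus :: real \<times> real \<Rightarrow> complex.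
               C_inf (UNIV \<times> U) chi_plus \<and> C_inf (UNIV \<times> U) chi_minus \<and>
               (\<forall>k\<in>U. bloch_eigenfunction V k (Eplus k) (\<lambda>z. chi_plus (z, k)) \<and>
                       integral {0..1} (\<lambda>z. (cmod (chi_plus (z, k)))\<^sup>2) = 1 \<and>
                       bloch_eigenfunction V k (Eminus k) (\<lambda>z. chi_minus (z, k)) \<and>
                       integral {0..1} (\<lambda>z. (cmod (chi_minus (z, k)))\<^sup>2) = 1)"
    and A4: "deriv Eplus pstar > 0" "deriv Eminus pstar < 0"
    and gap0: "bloch_gap V n p0 > 0"
    and tstar_pos: "tstar > 0"
    and traj_smooth: "C_inf {0..<tstar} (\<lambda>t. (q t, p t))"
    and traj_sol: "flow_sol (bloch_E V n) W {0..<tstar} q p"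
    and traj_init: "q 0 = q0" "p 0 = p0"
    and traj_unique: "\<forall>q' p'. C_inf {0..<tstar} (\<lambda>t. (q' t, p' t)) \<and>
                        flow_sol (bloch_E V n) W {0..<tstar} q' p' \<and> q' 0 = q0 \<and> p' 0 = p0
                        \<longrightarrow> (\<forall>t\<in>{0..<tstar}. q' t = q t \<and> p' t = p t)"
    and traj_gap: "\<forall>t\<in>{0..<tstar}. bloch_gap V n (p t) > 0"
    and p_lim: "(p \<longlongrightarrow> pstar) (at_left tstar)"
    and q_lim: "(q \<longlongrightarrow> qstar) (at_left tstar)"
    and force: "- deriv W qstar > 0"
  shows "\<exists>\<delta>0>0. \<forall>\<delta>. 0 < \<delta> \<and> \<delta> < \<delta>0 \<and> \<delta> < tstar \<longrightarrow>
    (\<exists>qp pp :: real \<Rightarrow> real.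
       \<comment> \<open>(i) existence, uniqueness, agreement with (q,p)\<close>
       C_inf {tstar - \<delta>..tstar + \<delta>} (\<lambda>t. (qp t, pp t)) \<and>
       flow_sol Eplus W {tstar - \<delta>..tstar + \<delta>} qp pp \<and>
       (\<forall>t\<in>{tstar - \<delta>..tstar + \<delta>}. pp t \<in> U) \<and>
       qp tstar = qstar \<and> pp tstar = pstar \<and>
       (\<forall>q' p'. C_inf {tstar - \<delta>..tstar + \<delta>} (\<lambda>t. (q' t, p' t)) \<and>
                flow_sol Eplus W {tstar - \<delta>..tstar + \<delta>} q' p' \<and>
                (\<forall>t\<in>{tstar - \<delta>..tstar + \<delta>}. p' t \<in> U) \<and>
                q' tstar = qstar \<and> p' tstar = pstar
                \<longrightarrow> (\<forall>t\<in>{tstar - \<delta>..tstar + \<delta>}. q' t = qp t \<and> p' t = pp t)) \<and>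
       (\<forall>t\<in>{tstar - \<delta>..<tstar}. q t = qp t \<and> p t = pp t) \<and>
       \<comment> \<open>(ii) and (iii)\<close>
       (\<exists>T0 > tstar + \<delta>. \<forall>T. tstar + \<delta> \<le> T \<and> T \<le> T0 \<longrightarrow>
          (\<exists>qn pn :: real \<Rightarrow> real.
             C_inf {tstar<..T} (\<lambda>t. (qn t, pn t)) \<and>
             flow_sol (bloch_E V (Suc n)) W {tstar<..T} qn pn \<and>
             ((\<lambda>t. (qn t, pn t)) \<longlongrightarrow> (qstar, pstar)) (at_right tstar) \<and>
             (\<forall>t\<in>{tstar<..T}. bloch_gap V (Suc n) (pn t) > 0) \<and>
             (\<forall>t\<in>{tstar<..tstar + \<delta>}. qp t = qn t \<and> pp t = pn t) \<and>
             C_inf {0..T} (\<lambda>t. if t \<le> tstar - \<delta> then (q t, p t)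
                               else if t \<le> tstar + \<delta> then (qp t, pp t)
                               else (qn t, pn t)))))"
proof -
  define e where "e = deriv_on U Eplus"
  define f where "f = (\<lambda>x. - deriv W x)"
  have e_smooth: "C_inf U e" unfolding e_def by (rule C_inf_deriv_on[OF A3(1)])
  have Eplus': "(Eplus has_real_derivative e k) (at k)" if "k \<in> U" for k
    unfolding e_def by (rule has_real_derivative_deriv_on_open[OF U_open A3(1) that])
  have E_n': "(bloch_E V n has_real_derivative e k) (at k)" if "k \<in> U" "k < pstar" for k
    unfolding e_def using that by (intro has_real_derivative_deriv_on_switch(1)[OF U_open A3(1)]) (auto simp: Eplus_def)
  have E_Suc': "(bloch_E V (Suc n) has_real_derivative e k) (at k)" if "k \<in> U" "pstar < k" for k
    unfolding e_def using that by (intro has_real_derivative_deriv_on_switch(2)[OF U_open A3(1)]) (auto simp: Eplus_def)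
  have f_smooth: "C_inf UNIV f"
    unfolding f_def deriv_eq_deriv_on_UNIV[OF W_smooth] by (intro C_inf_uminus C_inf_deriv_on W_smooth)
  obtain r L where r: "0 < r" "cball pstar r \<subseteq> U"
    and lip: "L-lipschitz_on (cball pstar r) e" "L-lipschitz_on (cball qstar r) f"
    and f_pos: "\<forall>x\<in>cball qstar r. 0 < f x"
    using lipschitz_neighbourhoods[OF U_open pstar_U e_smooth f_smooth] force unfolding f_def by blast
  obtain h qs ps where h: "0 < h" and branch: "hamiltonian_sol e f {tstar-h..tstar+h} qs ps"
    and branch_star: "qs tstar = qstar" "ps tstar = pstar"
    and half: "\<forall>t\<in>{tstar-h..tstar+h}. qs t \<in> cball qstar (r/2) \<and> ps t \<in> cball pstar (r/2)"
    and branch_smooth: "C_inf {tstar-h..tstar+h} (\<lambda>t. (qs t, ps t))"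
    and ps_mono: "\<forall>s\<in>{tstar-h..tstar+h}. \<forall>t\<in>{tstar-h..tstar+h}. s < t \<longrightarrow> ps s < ps t"
    and qs_lim: "(qs \<longlongrightarrow> qstar) (at tstar)" and ps_lim: "(ps \<longlongrightarrow> pstar) (at tstar)"
    by (rule hamiltonian_sol_smooth_branch[OF U_open e_smooth f_smooth r lip f_pos])
  define I where "I = {tstar-h..tstar+h}"
  have balls: "qs t \<in> cball qstar r" "ps t \<in> cball pstar r" if "t \<in> I" for t
    using half that r(1) unfolding I_def by fastforce+
  have psU: "\<forall>t\<in>I. ps t \<in> U" using balls r(2) by blast
  obtain c where c: "0 \<le> c" "c < tstar" and incoming: "hamiltonian_sol e f {c<..<tstar} q p"
    "\<forall>t\<in>{c<..<tstar}. q t \<in> cball qstar r \<and> p t \<in> cball pstar r \<and> p t < pstar"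
    using flow_sol_before_crossing[OF traj_sol tstar_pos q_lim p_lim r(1), of e] E_n' r(2) f_pos
    unfolding f_def by blast
  show ?thesis
  proof (intro exI[of _ "min (h/2) (tstar - c)"] conjI allI impI, goal_cases)
    case 1
    show ?case using h c by simp
  next
    case (2 \<delta>)
    define J where "J = {tstar - \<delta>..tstar + \<delta>}"
    have J: "J \<subseteq> I" "is_interval J" "tstar \<in> J" using 2 by (auto simp: I_def J_def is_interval_cc)
    have flow_iff: "flow_sol Eplus W J q' p' \<longleftrightarrow> hamiltonian_sol e f J q' p'" if "\<forall>t\<in>J. p' t \<in> U" for q' p'
      unfolding f_def using that Eplus' by (intro flow_sol_iff_hamiltonian_sol) blast
    have branch_J: "hamiltonian_sol e f J qs ps" using branch J(1) hamiltonian_sol_subset I_def by blast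
    have unique: "\<forall>t\<in>J. q' t = qs t \<and> p' t = ps t"
      if "flow_sol Eplus W J q' p'" "\<forall>t\<in>J. p' t \<in> U" "q' tstar = qstar" "p' tstar = pstar" for q' p'
    proof (rule hamiltonian_sol_unique[OF J(2,3) _ _ r(1) lip])
      show "hamiltonian_sol e f J q' p'" using flow_iff that(1,2) by blast
      show "\<forall>t\<in>J. qs t \<in> cball qstar (r/2) \<and> ps t \<in> cball pstar (r/2)" using half J(1) by (auto simp: I_def)
    qed (use that branch_star branch_J in auto)
    have agree_left: "\<forall>t\<in>{tstar - \<delta>..<tstar}. q t = qs t \<and> p t = ps t"
    proof (rule hamiltonian_sol_eq_at_left_limit[OF _ _ lip])
      have "{tstar - \<delta>..<tstar} \<subseteq> {c<..<tstar}" "{tstar - \<delta>..<tstar} \<subseteq> I"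
        using 2 by (auto simp: I_def)
      then show "hamiltonian_sol e f {tstar - \<delta>..<tstar} q p" "hamiltonian_sol e f {tstar - \<delta>..<tstar} qs ps"
        "\<forall>t\<in>{tstar - \<delta>..<tstar}. q t \<in> cball qstar r \<and> qs t \<in> cball qstar r \<and> p t \<in> cball pstar r \<and> ps t \<in> cball pstar r"
        using incoming branch balls hamiltonian_sol_subset I_def by blast+
      show "((\<lambda>t. q t - qs t) \<longlongrightarrow> 0) (at_left tstar)" "((\<lambda>t. p t - ps t) \<longlongrightarrow> 0) (at_left tstar)"
        using tendsto_diff[OF q_lim tendsto_mono[OF at_within_le_at qs_lim]]
          tendsto_diff[OF p_lim tendsto_mono[OF at_within_le_at ps_lim]] by simp_all
    qed
    have after: "C_inf {tstar<..T} (\<lambda>t. (qs t, ps t)) \<and> flow_sol (bloch_E V (Suc n)) W {tstar<..T} qs ps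
        \<and> (\<forall>t\<in>{tstar<..T}. bloch_gap V (Suc n) (ps t) > 0)
        \<and> C_inf {0..T} (\<lambda>t. if t \<le> tstar - \<delta> then (q t, p t)
            else if t \<le> tstar + \<delta> then (qs t, ps t) else (qs t, ps t))"
      if T: "tstar + \<delta> \<le> T" "T \<le> tstar + h" for T
    proof (intro conjI)
      have TI: "{tstar<..T} \<subseteq> I" "{tstar - \<delta>..T} \<subseteq> I" using T 2 by (auto simp: I_def)
      show "C_inf {tstar<..T} (\<lambda>t. (qs t, ps t))" using branch_smooth TI(1) unfolding I_def by (rule C_inf_subset)
      have above: "ps t \<in> U" "pstar < ps t" if "t \<in> {tstar<..T}" for t
        using that TI ps_mono psU branch_star h by (auto simp: I_def)
      have "\<forall>t\<in>{tstar<..T}. (bloch_E V (Suc n) has_real_derivative e (ps t)) (at (ps t))"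
        using above E_Suc' by blast
      moreover have "hamiltonian_sol e f {tstar<..T} qs ps"
        using hamiltonian_sol_subset[OF branch] TI(1) by (simp add: I_def)
      ultimately show "flow_sol (bloch_E V (Suc n)) W {tstar<..T} qs ps"
        by (simp add: flow_sol_iff_hamiltonian_sol f_def)
      show "\<forall>t\<in>{tstar<..T}. bloch_gap V (Suc n) (ps t) > 0"
        using above by (metis bloch_gap_Suc_pos[OF A1(2) A2 n_pos] less_irrefl)
      show "C_inf {0..T} (\<lambda>t. if t \<le> tstar - \<delta> then (q t, p t)
          else if t \<le> tstar + \<delta> then (qs t, ps t) else (qs t, ps t))"
      proof (rule C_inf_cong)
        show "C_inf {0..T} (\<lambda>t. if t \<le> tstar - \<delta> then (q t, p t) else (qs t, ps t))"
          using C_inf_glue_interval[OF traj_smooth C_inf_subset[OF branch_smooth TI(2)[unfolded I_def]]] agree_left 2 T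
          by auto
      qed simp
    qed
    have "C_inf J (\<lambda>t. (qs t, ps t))" using branch_smooth J(1) unfolding I_def by (rule C_inf_subset)
    moreover have "flow_sol Eplus W J qs ps" using flow_iff[of ps qs] branch_J psU J(1) by blast
    moreover have "((\<lambda>t. (qs t, ps t)) \<longlongrightarrow> (qstar, pstar)) (at_right tstar)"
      using tendsto_Pair[OF qs_lim ps_lim] by (rule tendsto_mono[OF at_within_le_at])
    moreover have "tstar + \<delta> < tstar + h" using 2 by simp
    ultimately show ?case
      using unique agree_left after branch_star psU J(1) unfolding J_def
      by - (rule exI[of _ qs], rule exI[of _ ps], blast)
  qed
qed

end
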